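(* Let $T$ be a transitive tournament with $n$ vertices and let $k$ be a nonnegative integer. Then $T$ has at most $A\cdot\exp(C\sqrt{k})\cdot(n+1)$ $k$-cuts, where $C=\pi\sqrt{2/3}$ and $A$ is a constant such that the partition numbers satisfy $p(m)\le \frac{A}{m+1}\exp(C\sqrt{m})$ for every nonnegative integer $m$.
   Context: A transitive tournament with ordering $(v_1,\dots,v_n)$ is the tournament on $\{v_1,\dots,v_n\}$ in which $(v_i,v_j)$ is an arc iff $i<j$. A $k$-cut of a digraph $T$ is an ordered partition $(X,Y)$ of $V(T)$ (either part may be empty) such that there are at most $k$ arcs $(u,v)\in E(T)$ with $u\in Y$ and $v\in X$. The partition number $p(m)$ is the number of multisets of positive integers summing to $m$. It is known (Hardy–Ramanujan) that there is an absolute constant $A$ with $p(m)\le\frac{A}{m+1}\exp(\pi\sqrt{2/3}\sqrt{m})$ for all $m\ge 0$. *)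

theory Defs
  imports "HOL-Analysis.Analysis" "HOL-Library.Multiset"
begin

definition partition_number :: "nat \<Rightarrow> nat" where
  "partition_number m = card {M :: nat multiset. (\<forall>x\<in>#M. 0 < x) \<and> sum_mset M = m}"

definition transitive_tournament_arcs :: "'a list \<Rightarrow> ('a \<times> 'a) set" where
  "transitive_tournament_arcs vs = {(vs ! i, vs ! j) | i j. i < j \<and> j < length vs}"

definition k_cuts :: "'a set \<Rightarrow> ('a \<times> 'a) set \<Rightarrow> nat \<Rightarrow> ('a set \<times> 'a set) set" where
  "k_cuts V E k = {(X, Y). X \<union> Y = V \<and> X \<inter> Y = {} \<and>
      card {(u, v) \<in> E. u \<in> Y \<and> v \<in> X} \<le> k}"

end

theory Submission
  imports Defs
begin

text \<open>Encode a cut \<open>(X, Y)\<close> of the transitive tournament on \<open>v\<^sub>1, \<dots>, v\<^sub>n\<close> by the boolean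
  word \<open>w\<close> with \<open>w\<^sub>i \<longleftrightarrow> v\<^sub>i \<in> Y\<close>; the backward arcs are then exactly the inversions of \<open>w\<close>,
  i.e.\ positions \<open>i < j\<close> with \<open>w\<^sub>i\<close> true and \<open>w\<^sub>j\<close> false. Recording, for every false letter,
  the number of true letters before it gives a multiset of naturals summing to the number of
  inversions, from which \<open>w\<close> can be read off. Its nonzero part is a partition of some
  \<open>m \<le> k\<close> and it has at most \<open>n\<close> zeros, so there are at most \<open>(n + 1) (k + 1) p(k)\<close> such words
  (pad a partition of \<open>m\<close> with \<open>k - m\<close> ones to see that there are at most \<open>(k + 1) p(k)\<close>
  partitions of numbers \<open>m \<le> k\<close>). The hypothesis on \<open>p(k)\<close> absorbs the factor \<open>k + 1\<close>.\<close>

definition inversions :: "bool list \<Rightarrow> nat" where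
  "inversions w = card {(i, j). i < j \<and> j < length w \<and> w ! i \<and> \<not> w ! j}"

fun inversion_code :: "bool list \<Rightarrow> nat multiset" where
  "inversion_code [] = {#}"
| "inversion_code (b # w) =
     (if b then image_mset Suc (inversion_code w) else add_mset 0 (inversion_code w))"

lemma size_inversion_code: "size (inversion_code w) = length (filter Not w)"
  by (induction w) auto

lemma inversion_code_inj:
  "length w = length w' \<Longrightarrow> inversion_code w = inversion_code w' \<Longrightarrow> w = w'"
proof (induction w arbitrary: w')
  case Nil
  then show ?case by simp
next
  case (Cons b w)
  then obtain b' v where w': "w' = b' # v" and len: "length w = length v"
    by (cases w') auto
  have Suc_inj: "image_mset Suc M = image_mset Suc N \<Longrightarrow> M = N" for M N :: "nat multiset"
    by (drule arg_cong[of _ _ "image_mset (\<lambda>x. x - 1)"]) (simp add: multiset.map_comp o_def)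
  have zero_Suc_ne: "add_mset 0 M \<noteq> image_mset Suc N" for M N :: "nat multiset"
    by (metis Zero_not_Suc image_iff set_image_mset union_single_eq_member)
  have "b = b' \<and> inversion_code w = inversion_code v"
    using Cons.prems(2) unfolding w'
    by (cases b; cases b') (auto dest: Suc_inj simp: zero_Suc_ne zero_Suc_ne[symmetric])
  then show ?case
    using Cons.IH len w' by simp
qed

lemma inversions_Cons:
  "inversions (b # w) = (if b then length (filter Not w) else 0) + inversions w"
proof -
  define S where "S = {(i, j). i < j \<and> j < length w \<and> w ! i \<and> \<not> w ! j}"
  define T where "T = (if b then (\<lambda>j. (0 :: nat, Suc j)) ` {j. j < length w \<and> \<not> w ! j} else {})"
  have pairs_eq: "{(i, j). i < j \<and> j < length (b # w) \<and> (b # w) ! i \<and> \<not> (b # w) ! j}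
      = T \<union> map_prod Suc Suc ` S"
  proof -
    have "i < j \<and> j < length (b # w) \<and> (b # w) ! i \<and> \<not> (b # w) ! j
        \<longleftrightarrow> (i, j) \<in> T \<union> map_prod Suc Suc ` S" for i j
      unfolding S_def T_def by (cases i; cases j) (auto simp: image_iff)
    then show ?thesis
      by auto
  qed
  have "finite S"
    by (rule finite_subset[of _ "{..<length w} \<times> {..<length w}"]) (auto simp: S_def)
  have "inversions (b # w) = card T + card (map_prod Suc Suc ` S)"
    unfolding inversions_def pairs_eq
    by (rule card_Un_disjoint) (use \<open>finite S\<close> in \<open>auto simp: T_def\<close>)
  also have "card (map_prod Suc Suc ` S) = inversions w"
    by (simp add: card_image inj_on_def S_def inversions_def)
  also have "card T = (if b then length (filter Not w) else 0)"
    by (auto simp: T_def card_image inj_on_def length_filter_conv_card)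
  finally show ?thesis .
qed

lemma sum_inversion_code: "sum_mset (inversion_code w) = inversions w"
proof (induction w)
  case Nil
  then show ?case by (simp add: inversions_def)
next
  case (Cons b w)
  have "sum_mset (image_mset Suc M) = size M + sum_mset M" for M :: "nat multiset"
    by (induction M) auto
  with Cons.IH show ?case
    by (simp add: inversions_Cons size_inversion_code)
qed

definition partitions_upto :: "nat \<Rightarrow> nat multiset set" where
  "partitions_upto k = {M. (\<forall>x\<in>#M. 0 < x) \<and> sum_mset M \<le> k}"

lemma finite_partitions_upto: "finite (partitions_upto k)"
proof (rule finite_subset)
  show "partitions_upto k \<subseteq> (\<Union>s\<le>k. multisets_of_size {..k} s)"
  proof
    fix M assume "M \<in> partitions_upto k"
    then have pos: "\<forall>x\<in>#M. 0 < x" and sum: "sum_mset M \<le> k"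
      by (auto simp: partitions_upto_def)
    have "size M \<le> sum_mset M"
      using pos by (induction M) auto
    moreover have "x \<le> sum_mset M" if "x \<in># M" for x
      using that by (induction M) auto
    ultimately show "M \<in> (\<Union>s\<le>k. multisets_of_size {..k} s)"
      using sum by (force simp: multisets_of_size_def)
  qed
qed auto

lemma card_partitions_upto_le: "card (partitions_upto k) \<le> (k + 1) * partition_number k"
proof -
  define P where "P = {M :: nat multiset. (\<forall>x\<in>#M. 0 < x) \<and> sum_mset M = k}"
  define pad where "pad M = (sum_mset M, M + replicate_mset (k - sum_mset M) 1)" for M
  have "finite P"
    by (rule finite_subset[OF _ finite_partitions_upto[of k]]) (auto simp: P_def partitions_upto_def)
  moreover have "inj_on pad (partitions_upto k)"
    by (auto simp: inj_on_def pad_def)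
  moreover have "pad ` partitions_upto k \<subseteq> {0..k} \<times> P"
    by (auto simp: pad_def partitions_upto_def P_def split: if_splits)
  ultimately have "card (partitions_upto k) \<le> card ({0..k} \<times> P)"
    by (intro card_inj_on_le) auto
  then show ?thesis
    by (simp add: card_cartesian_product partition_number_def P_def)
qed

lemma nat_multiset_positive_part_plus_zeros:
  "filter_mset (\<lambda>x. 0 < x) M + replicate_mset (count M 0) 0 = (M :: nat multiset)"
proof -
  have "filter_mset (\<lambda>x. \<not> 0 < x) M = filter_mset (\<lambda>x. x = 0) M"
    by (rule filter_mset_cong) auto
  also have "\<dots> = replicate_mset (count M 0) 0"
    by (rule filter_eq_replicate_mset)
  finally show ?thesis
    using multiset_partition[of M "\<lambda>x. 0 < x"] by simp
qed

lemma sum_mset_filter_mset_le: "sum_mset (filter_mset P M) \<le> sum_mset (M :: nat multiset)"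
  by (induction M) auto

lemma card_words_inversions_le:
  "card {w. length w = n \<and> inversions w \<le> k} \<le> (n + 1) * card (partitions_upto k)"
proof -
  define L where "L = {w. length w = n \<and> inversions w \<le> k}"
  define decompose where
    "decompose w = (count (inversion_code w) 0, filter_mset (\<lambda>x. 0 < x) (inversion_code w))" for w
  have "inj_on decompose L"
  proof (rule inj_onI)
    fix w w' assume "w \<in> L" "w' \<in> L" "decompose w = decompose w'"
    then have "inversion_code w = inversion_code w'"
      unfolding decompose_def by (metis prod.inject nat_multiset_positive_part_plus_zeros)
    with \<open>w \<in> L\<close> \<open>w' \<in> L\<close> show "w = w'"
      by (auto simp: L_def intro: inversion_code_inj)
  qed
  moreover have "decompose ` L \<subseteq> {0..n} \<times> partitions_upto k"
  proof (rule image_subsetI)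
    fix w assume "w \<in> L"
    have "count (inversion_code w) 0 \<le> length (filter Not w)"
      using count_le_size by (metis size_inversion_code)
    also have "\<dots> \<le> n"
      using \<open>w \<in> L\<close> length_filter_le[of Not w] by (simp add: L_def)
    finally have "count (inversion_code w) 0 \<le> n" .
    moreover have "sum_mset (filter_mset (\<lambda>x. 0 < x) (inversion_code w)) \<le> k"
    proof -
      note sum_mset_filter_mset_le
      also have "sum_mset (inversion_code w) \<le> k"
        using \<open>w \<in> L\<close> by (simp add: L_def sum_inversion_code)
      finally show ?thesis .
    qed
    ultimately show "decompose w \<in> {0..n} \<times> partitions_upto k"
      by (simp add: decompose_def partitions_upto_def)
  qed
  ultimately have "card L \<le> card ({0..n} \<times> partitions_upto k)"
    using finite_partitions_upto by (intro card_inj_on_le) auto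
  then show ?thesis
    by (simp add: L_def card_cartesian_product)
qed

lemma card_backward_arcs_transitive_tournament:
  assumes "distinct vs" and "X \<union> Y = set vs" and "X \<inter> Y = {}"
  shows "card {(u, v) \<in> transitive_tournament_arcs vs. u \<in> Y \<and> v \<in> X}
    = inversions (map (\<lambda>x. x \<in> Y) vs)"
proof -
  define w where "w = map (\<lambda>x. x \<in> Y) vs"
  define I where "I = {(i, j). i < j \<and> j < length w \<and> w ! i \<and> \<not> w ! j}"
  define vertices where "vertices = map_prod (nth vs) (nth vs)"
  have X: "v \<in> X \<longleftrightarrow> v \<in> set vs \<and> v \<notin> Y" for v
    using assms(2,3) by blast
  have "{(u, v) \<in> transitive_tournament_arcs vs. u \<in> Y \<and> v \<in> X} = vertices ` I"
    unfolding transitive_tournament_arcs_def I_def w_def vertices_def X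
    by (auto simp: image_iff)
  moreover have "inj_on vertices I"
    using assms(1) by (auto simp: inj_on_def I_def w_def vertices_def nth_eq_iff_index_eq)
  ultimately show ?thesis
    by (simp add: card_image inversions_def I_def w_def)
qed

lemma card_k_cuts_transitive_tournament_le:
  assumes "distinct vs"
  shows "card (k_cuts (set vs) (transitive_tournament_arcs vs) k)
    \<le> card {w. length w = length vs \<and> inversions w \<le> k}"
proof (rule card_inj_on_le)
  define word where "word = (\<lambda>(X :: 'a set, Y). map (\<lambda>x. x \<in> Y) vs)"
  show "inj_on word (k_cuts (set vs) (transitive_tournament_arcs vs) k)"
  proof (rule inj_onI, clarify)
    fix X Y X' Y'
    assume "(X, Y) \<in> k_cuts (set vs) (transitive_tournament_arcs vs) k"
      and "(X', Y') \<in> k_cuts (set vs) (transitive_tournament_arcs vs) k"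
      and "word (X, Y) = word (X', Y')"
    then have "X = set vs - Y" "X' = set vs - Y'" "Y \<subseteq> set vs" "Y' \<subseteq> set vs"
      and "\<forall>x\<in>set vs. x \<in> Y \<longleftrightarrow> x \<in> Y'"
      by (auto simp: k_cuts_def word_def)
    then show "X = X' \<and> Y = Y'"
      by blast
  qed
  show "word ` k_cuts (set vs) (transitive_tournament_arcs vs) k
      \<subseteq> {w. length w = length vs \<and> inversions w \<le> k}"
    using card_backward_arcs_transitive_tournament[OF assms]
    by (auto simp: word_def k_cuts_def)
  show "finite {w. length w = length vs \<and> inversions w \<le> k}"
    by (rule finite_subset[OF _ finite_lists_length_eq[of "UNIV :: bool set"]]) auto
qed

theorem mainTheorem7:
  fixes vs :: "'a list" and k :: nat and A :: real
  assumes "distinct vs"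
    and "\<forall>m::nat. real (partition_number m)
            \<le> A / (real m + 1) * exp (pi * sqrt (2/3) * sqrt (real m))"
  shows "real (card (k_cuts (set vs) (transitive_tournament_arcs vs) k))
           \<le> A * exp (pi * sqrt (2/3) * sqrt (real k)) * (real (length vs) + 1)"
proof -
  define E where "E = exp (pi * sqrt (2/3) * sqrt (real k))"
  have "real (partition_number k) \<le> A / (real k + 1) * E"
    using assms(2) by (simp add: E_def)
  then have partition_bound: "(real k + 1) * real (partition_number k) \<le> A * E"
    using mult_left_mono[of _ _ "real k + 1"] by fastforce
  have "card (k_cuts (set vs) (transitive_tournament_arcs vs) k)
      \<le> card {w. length w = length vs \<and> inversions w \<le> k}"
    using assms(1) by (rule card_k_cuts_transitive_tournament_le)
  also have "\<dots> \<le> (length vs + 1) * card (partitions_upto k)"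
    by (rule card_words_inversions_le)
  also have "\<dots> \<le> (length vs + 1) * ((k + 1) * partition_number k)"
    by (intro mult_le_mono2 card_partitions_upto_le)
  finally have "real (card (k_cuts (set vs) (transitive_tournament_arcs vs) k))
      \<le> real ((length vs + 1) * ((k + 1) * partition_number k))"
    by (rule of_nat_mono)
  also have "\<dots> = (real (length vs) + 1) * ((real k + 1) * real (partition_number k))"
    by (simp add: algebra_simps)
  also have "\<dots> \<le> (real (length vs) + 1) * (A * E)"
    using partition_bound by (intro mult_left_mono) auto
  finally show ?thesis
    by (simp add: E_def mult.commute)
qed

end
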